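(* Let $\alpha=(\alpha_1,\ldots,\alpha_n)$ be a composition, and suppose there is $1\le r\le n-1$ with $\alpha_r<\alpha_{r+1}$. Let $w\in S_n$ be a permutation in which the value $r$ appears before the value $r+1$. Let $\alpha'=\alpha\cdot s_r$ (i.e. $\alpha$ with $\alpha_r$ and $\alpha_{r+1}$ interchanged). Then $x_\alpha(w)=x_{\alpha'}(w)$.
   Context: A composition is a sequence of $n$ nonnegative integers. The skyline diagram $D(\gamma)$ of a composition $\gamma$ is the set of boxes $(i,j)$ (row $i$, column $j$, rows numbered top to bottom) with $1\le j\le\gamma_i$. For $w=w_1\cdots w_n\in S_n$, the filling $\mathcal{F}_w(D(\gamma))$ is defined column by column: for each column $j$, for $k=1,\ldots,n$ in turn, place $w_k$ into the topmost still-empty box of column $j$ of $D(\gamma)$ whose row index is $\ge w_k$, skipping $w_k$ if no such box exists. Then $x_\gamma(w)=(x_1,\ldots,x_n)$, where $x_k$ is the number of appearances of $k$ in $\mathcal{F}_w(D(\gamma))$. *)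

theory Defs
  imports Main
begin

text \<open>Compositions are lists of naturals; entry i (1-indexed) is \<open>\<gamma> ! (i-1)\<close>.
Rows and values are 1-indexed.\<close>

definition is_perm :: "nat \<Rightarrow> nat list \<Rightarrow> bool" where
  "is_perm n w \<longleftrightarrow> length w = n \<and> distinct w \<and> set w = {1..n}"

definition col_rows :: "nat list \<Rightarrow> nat \<Rightarrow> nat set" where
  "col_rows \<gamma> j = {i. 1 \<le> i \<and> i \<le> length \<gamma> \<and> j \<le> \<gamma> ! (i - 1)}"

text \<open>Fill one column: A is the set of still-empty rows of that column; each value v is put into
the topmost (smallest index) empty row i with i \<ge> v, or skipped if none exists.\<close>
fun fill_col :: "nat set \<Rightarrow> nat list \<Rightarrow> (nat \<times> nat) list" where
  "fill_col A [] = []"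
| "fill_col A (v # vs) =
     (if \<exists>i\<in>A. v \<le> i
      then (let m = Min {i\<in>A. v \<le> i} in (m, v) # fill_col (A - {m}) vs)
      else fill_col A vs)"

text \<open>The filling F_w(D(gamma)): box (i,j) (row i, column j) maps to its entry, if any.\<close>
definition filling :: "nat list \<Rightarrow> nat list \<Rightarrow> nat \<times> nat \<Rightarrow> nat option" where
  "filling w \<gamma> ij = (if 1 \<le> snd ij then map_of (fill_col (col_rows \<gamma> (snd ij)) w) (fst ij) else None)"

definition x_vec :: "nat list \<Rightarrow> nat list \<Rightarrow> nat list" where
  "x_vec \<gamma> w = map (\<lambda>k. card {ij. filling w \<gamma> ij = Some k}) [1..<length \<gamma> + 1]"

end

theory Submission
  imports Defs
begin

text \<open>Interchanging \<open>\<alpha>\<^sub>r < \<alpha>\<^sub>r\<^sub>+\<^sub>1\<close> only affects the columns \<open>j\<close> with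
  \<open>\<alpha>\<^sub>r < j \<le> \<alpha>\<^sub>r\<^sub>+\<^sub>1\<close>, where the box in row \<open>r + 1\<close> moves to row \<open>r\<close>. Every value other
  than \<open>r + 1\<close> treats rows \<open>r\<close> and \<open>r + 1\<close> alike, so until the value \<open>r\<close> is placed the two
  fillings of such a column agree up to this renaming of rows; \<open>r\<close> then takes the moved box if
  it is still empty, after which both columns have the same empty rows. Hence every column
  receives the same values in both diagrams, and \<open>x\<^sub>k\<close> counts the columns receiving \<open>k\<close>.\<close>

lemma finite_col_rows: "finite (col_rows \<gamma> j)"
  by (rule finite_subset[of _ "{1..length \<gamma>}"]) (auto simp: col_rows_def)

lemma fill_col_rows_subset: "finite A \<Longrightarrow> fst ` set (fill_col A vs) \<subseteq> A"
proof (induction vs arbitrary: A)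
  case (Cons v vs)
  have "Min {i\<in>A. v \<le> i} \<in> A" if "\<exists>i\<in>A. v \<le> i"
    using Min_in[of "{i\<in>A. v \<le> i}"] that Cons.prems by auto
  then show ?case
    using Cons.IH[of "A - {Min {i\<in>A. v \<le> i}}"] Cons.IH[of A] Cons.prems by (auto simp: Let_def)
qed simp

lemma distinct_fill_col_rows: "finite A \<Longrightarrow> distinct (map fst (fill_col A vs))"
proof (induction vs arbitrary: A)
  case (Cons v vs)
  let ?m = "Min {i\<in>A. v \<le> i}"
  have "?m \<notin> fst ` set (fill_col (A - {?m}) vs)"
    using fill_col_rows_subset[of "A - {?m}" vs] Cons.prems by blast
  then show ?case using Cons by (simp add: Let_def)
qed simp

lemma fill_col_values_subset: "set (map snd (fill_col A vs)) \<subseteq> set vs"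
  by (induction vs arbitrary: A) (auto simp: Let_def)

lemma distinct_fill_col_values: "distinct vs \<Longrightarrow> distinct (map snd (fill_col A vs))"
proof (induction vs arbitrary: A)
  case (Cons v vs)
  have "v \<notin> set (map snd (fill_col B vs))" for B
    using fill_col_values_subset[of B vs] Cons.prems by auto
  then show ?case using Cons by (simp add: Let_def)
qed simp

lemma fill_col_append:
  "fill_col A (us @ vs) = fill_col A us @ fill_col (A - fst ` set (fill_col A us)) vs"
  by (induction us arbitrary: A) (auto simp: Let_def Diff_insert2[symmetric])

lemma Min_image_strict_mono_on:
  assumes "finite S" "S \<noteq> {}" "strict_mono_on S f"
  shows "Min (f ` S) = f (Min S)"
proof (rule Min_eqI)
  show "finite (f ` S)" "f (Min S) \<in> f ` S" using assms by auto
  fix y assume "y \<in> f ` S"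
  then obtain x where x: "x \<in> S" "y = f x" by blast
  have "Min S \<le> x" "Min S \<in> S" using assms x by auto
  then show "f (Min S) \<le> y"
    using x strict_mono_onD[OF assms(3)] by (metis order_le_less)
qed

lemma fill_col_relabel:
  assumes "finite A" "strict_mono_on A f"
    and "\<And>v i. v \<in> set vs \<Longrightarrow> i \<in> A \<Longrightarrow> v \<le> f i \<longleftrightarrow> v \<le> i"
  shows "fill_col (f ` A) vs = map (apfst f) (fill_col A vs)"
  using assms
proof (induction vs arbitrary: A)
  case (Cons v vs)
  define S where "S = {i\<in>A. v \<le> i}"
  have image_S: "{i\<in>f ` A. v \<le> i} = f ` S"
    using Cons.prems(3) by (auto simp: S_def)
  show ?case
  proof (cases "S = {}")
    case True
    then have "\<not> (\<exists>i\<in>f ` A. v \<le> i)" "\<not> (\<exists>i\<in>A. v \<le> i)"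
      using image_S by (auto simp: S_def)
    then show ?thesis using Cons by simp
  next
    case False
    define m where "m = Min S"
    have "m \<in> A" using Min_in[of S] False Cons.prems(1) by (simp add: m_def S_def)
    have "Min {i\<in>f ` A. v \<le> i} = f m"
      unfolding image_S m_def
    proof (rule Min_image_strict_mono_on)
      show "finite S" using Cons.prems(1) by (simp add: S_def)
      show "strict_mono_on S f" using Cons.prems(2) by (rule monotone_on_subset) (auto simp: S_def)
    qed fact
    moreover have "f ` A - {f m} = f ` (A - {m})"
      using strict_mono_on_imp_inj_on[OF Cons.prems(2)] \<open>m \<in> A\<close> by (auto simp: inj_on_eq_iff)
    moreover have "fill_col (f ` (A - {m})) vs = map (apfst f) (fill_col (A - {m}) vs)"
    proof (rule Cons.IH)
      show "strict_mono_on (A - {m}) f" using Cons.prems(2) by (rule monotone_on_subset) blast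
    qed (use Cons.prems in auto)
    moreover have "Min {i\<in>A. v \<le> i} = m" "\<exists>i\<in>A. v \<le> i" "\<exists>i\<in>f ` A. v \<le> i"
      using False image_S by (auto simp: S_def m_def)
    ultimately show ?thesis by (simp add: Let_def)
  qed
qed simp

definition raise_row :: "nat \<Rightarrow> nat \<Rightarrow> nat" where
  "raise_row r i = (if i = r then Suc r else i)"

lemma strict_mono_on_raise_row: "Suc r \<notin> C \<Longrightarrow> strict_mono_on C (raise_row r)"
  by (rule strict_mono_onI) (auto simp: raise_row_def intro!: Suc_lessI)

lemma raise_row_image_eq: "r \<notin> C \<Longrightarrow> raise_row r ` C = C"
  by (auto simp: raise_row_def image_iff)

lemma fill_col_values_raise_row_Cons:
  assumes "finite C" "Suc r \<notin> C"
  shows "map snd (fill_col (raise_row r ` C) (r # q)) = map snd (fill_col C (r # q))"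
proof (cases "r \<in> C")
  case True
  have "Min {i\<in>C. r \<le> i} = r"
    using True assms(1) by (intro Min_eqI) auto
  moreover have "Min {i\<in>raise_row r ` C. r \<le> i} = Suc r"
    using True assms by (intro Min_eqI) (auto simp: raise_row_def Suc_le_eq order_le_less)
  moreover have "raise_row r ` C - {Suc r} = C - {r}"
    using True assms(2) by (auto simp: raise_row_def image_iff)
  moreover have "Suc r \<in> raise_row r ` C"
    using True by (auto simp: raise_row_def image_iff)
  ultimately show ?thesis using True by (auto simp: Let_def)
qed (simp add: raise_row_image_eq)

lemma fill_col_values_raise_row:
  assumes "finite C" "Suc r \<notin> C" "Suc r \<notin> set p"
  shows "map snd (fill_col (raise_row r ` C) (p @ r # q)) = map snd (fill_col C (p @ r # q))"
proof -
  define P where "P = fill_col C p"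
  define C' where "C' = C - fst ` set P"
  have rows_P: "fst ` set P \<subseteq> C"
    using fill_col_rows_subset[OF assms(1)] by (simp add: P_def)
  have fill_p: "fill_col (raise_row r ` C) p = map (apfst (raise_row r)) P"
    unfolding P_def using assms
    by (intro fill_col_relabel strict_mono_on_raise_row) (auto simp: raise_row_def le_Suc_eq)
  have "raise_row r ` C - fst ` set (map (apfst (raise_row r)) P) = raise_row r ` C'"
    using inj_on_image_set_diff[OF strict_mono_on_imp_inj_on[OF strict_mono_on_raise_row[OF assms(2)]]]
      rows_P by (simp add: C'_def image_image comp_def)
  moreover have "map snd (fill_col (raise_row r ` C') (r # q)) = map snd (fill_col C' (r # q))"
    using assms by (intro fill_col_values_raise_row_Cons) (auto simp: C'_def)
  ultimately show ?thesis
    by (simp add: fill_col_append fill_p C'_def P_def comp_def)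
qed

lemma mem_col_rows_swap:
  assumes "1 \<le> r" "r < length \<gamma>"
  shows "i \<in> col_rows (\<gamma>[r - 1 := \<gamma> ! r, r := \<gamma> ! (r - 1)]) j \<longleftrightarrow>
    (if i = r then Suc r else if i = Suc r then r else i) \<in> col_rows \<gamma> j"
  using assms by (auto simp: col_rows_def nth_list_update)

lemma col_rows_swap_eq:
  assumes "1 \<le> r" "r < length \<gamma>" "r \<in> col_rows \<gamma> j \<longleftrightarrow> Suc r \<in> col_rows \<gamma> j"
  shows "col_rows (\<gamma>[r - 1 := \<gamma> ! r, r := \<gamma> ! (r - 1)]) j = col_rows \<gamma> j"
  using assms(3) mem_col_rows_swap[OF assms(1,2)] by (auto split: if_splits)

lemma col_rows_swap_raise_row:
  assumes "1 \<le> r" "r < length \<gamma>" "r \<notin> col_rows \<gamma> j" "Suc r \<in> col_rows \<gamma> j"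
  shows "Suc r \<notin> col_rows (\<gamma>[r - 1 := \<gamma> ! r, r := \<gamma> ! (r - 1)]) j"
    and "col_rows \<gamma> j = raise_row r ` col_rows (\<gamma>[r - 1 := \<gamma> ! r, r := \<gamma> ! (r - 1)]) j"
  using assms mem_col_rows_swap[OF assms(1,2)]
  by (auto simp: raise_row_def image_iff split: if_splits)

lemma fill_col_values_col_rows_swap:
  assumes "1 \<le> r" "r < length \<gamma>" "\<gamma> ! (r - 1) \<le> \<gamma> ! r"
    and "Suc r \<notin> set p"
  shows "map snd (fill_col (col_rows \<gamma> j) (p @ r # q)) =
    map snd (fill_col (col_rows (\<gamma>[r - 1 := \<gamma> ! r, r := \<gamma> ! (r - 1)]) j) (p @ r # q))"
proof (cases "r \<in> col_rows \<gamma> j \<longleftrightarrow> Suc r \<in> col_rows \<gamma> j")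
  case True
  then show ?thesis using col_rows_swap_eq[OF assms(1,2)] by simp
next
  case False
  have "r \<in> col_rows \<gamma> j \<longleftrightarrow> j \<le> \<gamma> ! (r - 1)" "Suc r \<in> col_rows \<gamma> j \<longleftrightarrow> j \<le> \<gamma> ! r"
    using assms(1,2) by (auto simp: col_rows_def)
  then have "r \<notin> col_rows \<gamma> j" "Suc r \<in> col_rows \<gamma> j"
    using False assms(3) by auto
  note moved = col_rows_swap_raise_row[OF assms(1,2) this]
  show ?thesis
    using fill_col_values_raise_row[OF finite_col_rows moved(1) assms(4)] by (simp add: moved(2))
qed

lemma card_filling_eq_card_columns:
  assumes "distinct w"
  shows "card {ij. filling w \<gamma> ij = Some k} =
    card {j. 1 \<le> j \<and> k \<in> set (map snd (fill_col (col_rows \<gamma> j) w))}"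
proof -
  let ?F = "{ij. filling w \<gamma> ij = Some k}"
  have mem_F: "(i, j) \<in> ?F \<longleftrightarrow> 1 \<le> j \<and> (i, k) \<in> set (fill_col (col_rows \<gamma> j) w)" for i j
    by (simp add: filling_def map_of_eq_Some_iff distinct_fill_col_rows finite_col_rows)
  have inj: "inj_on snd ?F"
  proof (rule inj_onI)
    fix x y assume "x \<in> ?F" "y \<in> ?F" "snd x = snd y"
    moreover have "inj_on snd (set (fill_col (col_rows \<gamma> j) w))" for j
      using distinct_fill_col_values[OF assms] by (simp add: distinct_map)
    ultimately show "x = y"
      using mem_F inj_onD[of snd _ "(fst x, k)" "(fst y, k)"] by (cases x; cases y) auto
  qed
  have "snd ` ?F = {j. 1 \<le> j \<and> k \<in> set (map snd (fill_col (col_rows \<gamma> j) w))}"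
  proof (rule set_eqI)
    fix j
    have "j \<in> snd ` ?F \<longleftrightarrow> (\<exists>i. (i, j) \<in> ?F)"
      by (auto simp: image_iff)
    then show "j \<in> snd ` ?F \<longleftrightarrow> j \<in> {j. 1 \<le> j \<and> k \<in> set (map snd (fill_col (col_rows \<gamma> j) w))}"
      unfolding mem_F by (auto intro: rev_image_eqI)
  qed
  then show ?thesis
    unfolding card_image[OF inj, symmetric] by simp
qed

lemma x_vec_eqI:
  assumes "distinct w" "length \<gamma> = length \<delta>"
    and "\<And>j. map snd (fill_col (col_rows \<gamma> j) w) = map snd (fill_col (col_rows \<delta> j) w)"
  shows "x_vec \<gamma> w = x_vec \<delta> w"
  using assms by (simp add: x_vec_def card_filling_eq_card_columns)

lemma distinct_split_before:
  assumes "distinct xs" "a < b" "b < length xs"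
  obtains p q where "xs = p @ xs ! a # q" "xs ! b \<notin> set p"
proof
  show "xs = take a xs @ xs ! a # drop (Suc a) xs"
    using assms by (simp add: id_take_nth_drop)
  have "drop a xs ! (b - a) = xs ! b" "b - a < length (drop a xs)"
    using assms by simp_all
  then have "xs ! b \<in> set (drop a xs)" by (metis nth_mem)
  then show "xs ! b \<notin> set (take a xs)"
    using set_take_disj_set_drop_if_distinct[OF assms(1) order_refl] by blast
qed

theorem proposition4p5:
  fixes \<alpha> w :: "nat list" and n r :: nat
  assumes "length \<alpha> = n"
    and "1 \<le> r" and "r \<le> n - 1"
    and "\<alpha> ! (r - 1) < \<alpha> ! r"
    and "is_perm n w"
    and "\<exists>a b. a < b \<and> b < n \<and> w ! a = r \<and> w ! b = r + 1"
  shows "x_vec \<alpha> w = x_vec (\<alpha>[r - 1 := \<alpha> ! r, r := \<alpha> ! (r - 1)]) w"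
proof -
  let ?\<beta> = "\<alpha>[r - 1 := \<alpha> ! r, r := \<alpha> ! (r - 1)]"
  have w: "distinct w" "length w = n" and r: "r < length \<alpha>"
    using assms(1-3,5) by (auto simp: is_perm_def)
  obtain a b where ab: "a < b" "b < length w" "w ! a = r" "w ! b = Suc r"
    using assms(6) w(2) by auto
  obtain p q where w_split: "w = p @ r # q" and before: "Suc r \<notin> set p"
    using distinct_split_before[OF w(1) ab(1,2)] ab(3,4) by metis
  show ?thesis
  proof (rule x_vec_eqI[OF w(1)])
    show "map snd (fill_col (col_rows \<alpha> j) w) = map snd (fill_col (col_rows ?\<beta> j) w)" for j
      unfolding w_split using assms(2,4) r before by (intro fill_col_values_col_rows_swap) simp_all
  qed simp
qed

end
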